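(* Let $x\in\mathbb X$ with $\mathcal R(x)=\inf\{\mathcal R(z):z\in\mathbb X,\ Az=Ax\}$. Then $$\varrho_1(x)=\inf\{\|\omega\|_{\mathbb Y}:\omega\in\mathbb Y,\ A^*\omega\in\partial\mathcal R(x)\}\quad(\inf\emptyset=\infty).$$ Moreover, if this quantity is finite and $x_\alpha\in R_\alpha(Ax)$, $\alpha>0$, is any selection, then $\frac1\alpha(Ax-Ax_\alpha)$ converges weakly in $\mathbb Y$ as $\alpha\searrow0$ to the unique $\omega\in\mathbb Y$ with $A^*\omega\in\partial\mathcal R(x)$ and $\|\omega\|_{\mathbb Y}=\varrho_1(x)$.
   Context: Standing setting: $\mathbb X$ real Banach space, $\tau$ a topology with $(\mathbb X,\tau)$ locally convex Hausdorff; $\mathcal R:\mathbb X\to(-\infty,\infty]$ proper convex with $\tau$-compact sublevel sets; $\mathbb Y$ real Hilbert space; $A:\mathbb X\to\mathbb Y$ linear, $\tau$-to-weak continuous. $T_\alpha(x,g):=\frac1{2\alpha}\|g-Ax\|_{\mathbb Y}^2+\mathcal R(x)$, $R_\alpha(g):=\operatorname{argmin}_{x\in\mathrm{dom}(\mathcal R)}T_\alpha(x,g)$, $\varrho_1(x):=\sup\{\alpha^{-1}\|Ax-Ax_\alpha\|_{\mathbb Y}:\alpha>0,x_\alpha\in R_\alpha(Ax)\}$. The notation $A^*\omega\in\partial\mathcal R(x)$ means $\mathcal R(z)\ge\mathcal R(x)+\langle\omega,A(z-x)\rangle_{\mathbb Y}$ for all $z\in\mathbb X$. *)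

theory Defs
  imports "HOL-Analysis.Analysis"
begin

definition weak_top :: "'b::real_inner topology" where
  "weak_top = topology_generated_by {{y. inner y w \<in> V} | w V. open (V :: real set)}"

definition locally_convex_hausdorff :: "'a::real_vector topology \<Rightarrow> bool" where
  "locally_convex_hausdorff tau \<longleftrightarrow>
     topspace tau = UNIV \<and> Hausdorff_space tau \<and>
     continuous_map (prod_topology tau tau) tau (\<lambda>(x, y). x + y) \<and>
     continuous_map (prod_topology euclideanreal tau) tau (\<lambda>(t, x). t *\<^sub>R x) \<and>
     (\<forall>x U. openin tau U \<and> x \<in> U \<longrightarrow> (\<exists>V. openin tau V \<and> convex V \<and> x \<in> V \<and> V \<subseteq> U))"

definition proper_convex :: "('a::real_vector \<Rightarrow> ereal) \<Rightarrow> bool" where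
  "proper_convex R \<longleftrightarrow>
     (\<forall>x. R x \<noteq> -\<infinity>) \<and> (\<exists>x. R x \<noteq> \<infinity>) \<and>
     (\<forall>x y t. 0 < t \<and> t < 1 \<longrightarrow>
        R (t *\<^sub>R x + (1 - t) *\<^sub>R y) \<le> ereal t * R x + ereal (1 - t) * R y)"

definition dom_R :: "('a \<Rightarrow> ereal) \<Rightarrow> 'a set" where
  "dom_R R = {x. R x \<noteq> \<infinity>}"

definition Tik :: "('a \<Rightarrow> 'b::real_normed_vector) \<Rightarrow> ('a \<Rightarrow> ereal) \<Rightarrow> real \<Rightarrow> 'a \<Rightarrow> 'b \<Rightarrow> ereal" where
  "Tik A R \<alpha> x g = ereal (norm (g - A x)^2 / (2 * \<alpha>)) + R x"

definition Rmin :: "('a \<Rightarrow> 'b::real_normed_vector) \<Rightarrow> ('a \<Rightarrow> ereal) \<Rightarrow> real \<Rightarrow> 'b \<Rightarrow> 'a set" where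
  "Rmin A R \<alpha> g = {x \<in> dom_R R. \<forall>z \<in> dom_R R. Tik A R \<alpha> x g \<le> Tik A R \<alpha> z g}"

definition rho1 :: "('a \<Rightarrow> 'b::real_normed_vector) \<Rightarrow> ('a \<Rightarrow> ereal) \<Rightarrow> 'a \<Rightarrow> ereal" where
  "rho1 A R x = Sup {ereal (norm (A x - A xa) / \<alpha>) | \<alpha> xa. \<alpha> > 0 \<and> xa \<in> Rmin A R \<alpha> (A x)}"

text \<open>A^* omega in the subdifferential of R at x.\<close>
definition adj_subgrad :: "('a::real_vector \<Rightarrow> 'b::real_inner) \<Rightarrow> ('a \<Rightarrow> ereal) \<Rightarrow> 'b \<Rightarrow> 'a \<Rightarrow> bool" where
  "adj_subgrad A R \<omega> x \<longleftrightarrow> (\<forall>z. R z \<ge> R x + ereal (inner \<omega> (A (z - x))))"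

end

theory Submission
  imports Defs
begin

text \<open>
  Let \<open>x\<^sub>\<alpha>\<close> minimise \<open>T\<^sub>\<alpha>(\<cdot>, Ax)\<close> and \<open>w\<^sub>\<alpha> = (Ax - Ax\<^sub>\<alpha>)/\<alpha>\<close>. The optimality condition is
  \<open>A\<^sup>*w\<^sub>\<alpha> \<in> \<partial>R(x\<^sub>\<alpha>)\<close>, and monotonicity of \<open>\<partial>R\<close> yields
  \<open>(\<alpha>+\<beta>)\<parallel>w\<^sub>\<alpha> - w\<^sub>\<beta>\<parallel>\<^sup>2 \<le> (\<beta>-\<alpha>)(\<parallel>w\<^sub>\<alpha>\<parallel>\<^sup>2 - \<parallel>w\<^sub>\<beta>\<parallel>\<^sup>2)\<close> as well as \<open>\<parallel>w\<^sub>\<alpha>\<parallel> \<le> \<parallel>\<omega>\<parallel>\<close> whenever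
  \<open>A\<^sup>*\<omega> \<in> \<partial>R(x)\<close>. So \<open>w\<^sub>\<alpha>\<close> does not depend on the choice of \<open>x\<^sub>\<alpha>\<close>, \<open>\<rho>\<^sub>1(x) = sup \<parallel>w\<^sub>\<alpha>\<parallel>\<close> is
  at most the infimum in question, and if it is finite then \<open>\<parallel>w\<^sub>\<alpha>\<parallel>\<^sup>2\<close> increases boundedly as
  \<open>\<alpha> \<searrow> 0\<close>, which makes \<open>w\<^sub>\<alpha>\<close> Cauchy: it even converges in norm. The limit \<open>\<omega>\<close> inherits the
  subgradient inequality because \<open>Ax\<^sub>\<alpha> \<rightarrow> Ax\<close>, \<open>R\<close> has \<open>\<tau>\<close>-compact sublevel sets (whose images
  under \<open>A\<close> are therefore weakly, hence norm, closed) and \<open>x\<close> minimises \<open>R\<close> on its fibre.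
  Finally \<open>\<parallel>\<omega>\<parallel> \<le> \<rho>\<^sub>1(x)\<close>, and the minimal-norm element of the convex set of such \<open>\<omega>\<close> is unique
  by the parallelogram law.
\<close>

lemma topspace_weak_top [simp]: "topspace (weak_top :: 'b::real_inner topology) = UNIV"
proof -
  have "UNIV = {y::'b. inner y 0 \<in> UNIV}" by simp
  then show ?thesis unfolding weak_top_def topology_generated_by_topspace by blast
qed

lemma openin_weak_top_inner: "open V \<Longrightarrow> openin weak_top {y::'b::real_inner. inner y w \<in> V}"
  unfolding weak_top_def openin_topology_generated_by_iff
  by (rule generate_topology_on.Basis) blast

lemma continuous_map_weak_top_inner:
  "continuous_map weak_top euclideanreal (\<lambda>y::'b::real_inner. inner y w)"
  unfolding continuous_map_def by (auto simp: vimage_def openin_weak_top_inner)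

lemma continuous_map_euclidean_weak_top: "continuous_map euclidean weak_top (id :: 'b::real_inner \<Rightarrow> 'b)"
  unfolding weak_top_def
proof (rule continuous_on_generated_topo)
  fix U assume "U \<in> {{y::'b. inner y w \<in> V} | w V. open (V :: real set)}"
  then obtain w V where "U = (\<lambda>y. inner y w) -` V" "open V" by (auto simp: vimage_def)
  then show "openin euclidean (id -` U \<inter> topspace euclidean)"
    by (simp add: open_vimage continuous_on_inner continuous_on_id continuous_on_const)
qed (auto simp: topspace_weak_top[unfolded weak_top_def])

lemma limitin_weak_top_if_tendsto:
  assumes "(f \<longlongrightarrow> l) F" shows "limitin (weak_top :: 'b::real_inner topology) f l F"
  using continuous_map_limit[OF continuous_map_euclidean_weak_top, of f l F] assms by simp

lemma closed_if_closedin_weak_top: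
  assumes "closedin (weak_top :: 'b::real_inner topology) S" shows "closed S"
  using closedin_continuous_map_preimage[OF continuous_map_euclidean_weak_top assms] by simp

lemma Hausdorff_space_weak_top: "Hausdorff_space (weak_top :: 'b::real_inner topology)"
  unfolding Hausdorff_space_def
proof (intro allI impI)
  fix y y' :: 'b assume "y \<in> topspace weak_top \<and> y' \<in> topspace weak_top \<and> y \<noteq> y'"
  then have "0 < inner (y - y') (y - y')" by simp
  then have sep: "inner y' (y - y') < inner y (y - y')" by (simp add: inner_diff_left)
  define c where "c = (inner y (y - y') + inner y' (y - y')) / 2"
  show "\<exists>U V. openin weak_top U \<and> openin weak_top V \<and> y \<in> U \<and> y' \<in> V \<and> disjnt U V"
  proof (intro exI conjI)
    show "openin weak_top {z. inner z (y - y') \<in> {c<..}}" "openin weak_top {z. inner z (y - y') \<in> {..<c}}"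
      by (simp_all only: openin_weak_top_inner open_greaterThan open_lessThan)
    show "y \<in> {z. inner z (y - y') \<in> {c<..}}" "y' \<in> {z. inner z (y - y') \<in> {..<c}}"
      using sep by (simp_all add: c_def)
  qed (auto simp: disjnt_def)
qed

lemma closedin_weak_top_cball: "closedin (weak_top :: 'b::real_inner topology) {y. norm (y - g) \<le> e}"
proof (cases "e < 0")
  case True
  then have "{y::'b. norm (y - g) \<le> e} = {}" by (smt (verit) Collect_empty_eq norm_ge_zero)
  then show ?thesis by simp
next
  case False
  define H where "H w = {y. inner y w \<in> {..e * norm w + inner g w}}" for w
  have "{y. norm (y - g) \<le> e} = (\<Inter>w. H w)"
  proof (intro equalityI subsetI)
    fix y assume "y \<in> {y. norm (y - g) \<le> e}"
    then have "inner (y - g) w \<le> e * norm w" for w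
      using norm_cauchy_schwarz[of "y - g" w] mult_right_mono[of "norm (y - g)" e "norm w"] by simp
    then show "y \<in> (\<Inter>w. H w)"
      unfolding H_def by (simp add: inner_diff_left add.commute diff_le_eq)
  next
    fix y assume "y \<in> (\<Inter>w. H w)"
    then have "inner y (y - g) \<le> e * norm (y - g) + inner g (y - g)" unfolding H_def by blast
    then have "inner (y - g) (y - g) \<le> e * norm (y - g)" by (simp add: inner_diff_left)
    then have "norm (y - g) * norm (y - g) \<le> e * norm (y - g)"
      by (simp add: power2_eq_square[symmetric] dot_square_norm)
    then show "y \<in> {y. norm (y - g) \<le> e}"
      using False mult_le_cancel_right[of "norm (y - g)" "norm (y - g)" e] by auto
  qed
  moreover have "closedin weak_top (H w)" for w
    using closedin_continuous_map_preimage[OF continuous_map_weak_top_inner, of "{..e * norm w + inner g w}"]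
    unfolding H_def by simp
  ultimately show ?thesis by (auto intro: closedin_Inter)
qed

lemma closedin_sublevel_add:
  fixes f :: "'a \<Rightarrow> real" and g :: "'a \<Rightarrow> ereal"
  assumes f: "\<And>s. closedin X {z \<in> topspace X. f z \<le> s}"
    and g: "\<And>s. closedin X {z \<in> topspace X. g z \<le> ereal s}"
  shows "closedin X {z \<in> topspace X. ereal (f z) + g z \<le> ereal t}"
proof -
  have sublevel_iff: "ereal (f z) + g z \<le> ereal t \<longleftrightarrow> (\<forall>s. f z \<le> s \<or> g z \<le> ereal (t - s))" for z
  proof (cases "g z")
    case (real r)
    have "(\<forall>s. f z \<le> s \<or> r \<le> t - s) \<Longrightarrow> f z + r \<le> t"
      by (drule spec[of _ "(f z + t - r) / 2"]) (auto simp: field_simps)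
    then show ?thesis using real by force
  next
    case PInf
    then show ?thesis by (auto intro: exI[of _ "f z - 1"])
  qed simp
  have "{z \<in> topspace X. ereal (f z) + g z \<le> ereal t}
      = topspace X \<inter> (\<Inter>s. {z \<in> topspace X. f z \<le> s} \<union> {z \<in> topspace X. g z \<le> ereal (t - s)})"
    by (auto simp: sublevel_iff)
  also have "closedin X \<dots>"
    using f g by (intro closedin_Int closedin_topspace closedin_Inter closedin_Un) auto
  finally show ?thesis .
qed

lemma closedin_sublevels_compactin_attains_min:
  fixes f :: "'a \<Rightarrow> 'b::{complete_linorder, dense_linorder}"
  assumes closed: "\<And>t. closedin X {z \<in> topspace X. f z \<le> t}"
    and compact: "compactin X {z \<in> topspace X. f z \<le> c}"
    and a: "a \<in> topspace X" "f a \<le> c"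
  shows "\<exists>z\<in>topspace X. \<forall>y\<in>topspace X. f z \<le> f y"
proof -
  define m where "m = (INF y\<in>topspace X. f y)"
  have m_le: "m \<le> f y" if "y \<in> topspace X" for y
    unfolding m_def using that by (rule INF_lower)
  show ?thesis
  proof (cases "c \<le> m")
    case True
    then show ?thesis using a m_le by (meson order.trans)
  next
    case False
    let ?K = "{z \<in> topspace X. f z \<le> c}"
    let ?U = "(\<lambda>t. {z \<in> topspace X. f z \<le> t}) ` {m<..}"
    have "?K \<inter> \<Inter>?U \<noteq> {}"
    proof (rule compactin_fip[THEN iffD1, OF compact, THEN conjunct2, rule_format], intro conjI allI impI)
      show "\<forall>C\<in>?U. closedin X C" using closed by blast
    next
      fix \<F> assume "finite \<F> \<and> \<F> \<subseteq> ?U"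
      then obtain T where T: "finite T" "T \<subseteq> {m<..}" "\<F> = (\<lambda>t. {z \<in> topspace X. f z \<le> t}) ` T"
        by (meson finite_subset_image)
      define t0 where "t0 = Min (insert c T)"
      have t0_le: "t0 \<le> t" if "t \<in> insert c T" for t
        using T(1) that unfolding t0_def by simp
      have "m < t0" using False T(1,2) unfolding t0_def by (auto simp: not_le)
      then obtain y where y: "y \<in> topspace X" "f y < t0"
        unfolding m_def INF_less_iff by blast
      have "f y \<le> t" if "t \<in> insert c T" for t
        using y(2) t0_le[OF that] by (meson less_imp_le less_le_trans)
      then have "y \<in> ?K \<inter> \<Inter>\<F>" using y(1) unfolding T(3) by blast
      then show "?K \<inter> \<Inter>\<F> \<noteq> {}" by blast
    qed
    then obtain z where z: "z \<in> topspace X" "\<And>t. m < t \<Longrightarrow> f z \<le> t" by blast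
    have "f z \<le> m" by (rule dense_ge) (rule z(2))
    then show ?thesis using z(1) m_le by (meson order.trans)
  qed
qed

lemma tendsto_at_right_0_if_norm_gap:
  fixes w :: "real \<Rightarrow> 'b::{real_normed_vector, complete_space}"
  assumes gap: "\<And>\<alpha> \<beta>. 0 < \<alpha> \<Longrightarrow> \<alpha> \<le> \<beta> \<Longrightarrow> norm (w \<alpha> - w \<beta>)^2 \<le> norm (w \<alpha>)^2 - norm (w \<beta>)^2"
    and bound: "\<And>\<alpha>. 0 < \<alpha> \<Longrightarrow> norm (w \<alpha>) \<le> M"
  shows "\<exists>\<omega>. (w \<longlongrightarrow> \<omega>) (at_right 0)"
proof -
  define L where "L = (SUP \<alpha>\<in>{0<..}. norm (w \<alpha>)^2)"
  have bdd: "bdd_above ((\<lambda>\<alpha>. norm (w \<alpha>)^2) ` {0<..})"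
    using bound by (intro bdd_aboveI2[of _ _ "M^2"]) (simp add: power_mono)
  have below_L: "norm (w \<alpha>)^2 \<le> L" if "0 < \<alpha>" for \<alpha>
    unfolding L_def using bdd that by (intro cSUP_upper) auto
  have cauchy: "cauchy_filter (filtermap w (at_right 0))"
    unfolding cauchy_filter_metric_filtermap
  proof (intro allI impI)
    fix e :: real assume "0 < e"
    then have "L - e^2 < L" by simp
    then obtain \<delta> where \<delta>: "0 < \<delta>" "L - e^2 < norm (w \<delta>)^2"
      unfolding L_def using bdd by (subst (asm) less_cSUP_iff) auto
    have close: "dist (w \<alpha>) (w \<beta>) < e" if "0 < \<alpha>" "\<alpha> \<le> \<beta>" "\<beta> \<le> \<delta>" for \<alpha> \<beta>
    proof -
      have "norm (w \<beta>)^2 - norm (w \<delta>)^2 \<ge> norm (w \<beta> - w \<delta>)^2"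
        using gap[of \<beta> \<delta>] that by simp
      then have "norm (w \<delta>)^2 \<le> norm (w \<beta>)^2" by (smt (verit) zero_le_power2)
      moreover have "norm (w \<alpha> - w \<beta>)^2 \<le> norm (w \<alpha>)^2 - norm (w \<beta>)^2"
        using gap that by simp
      ultimately have "dist (w \<alpha>) (w \<beta>)^2 < e^2"
        using below_L[of \<alpha>] \<delta>(2) that unfolding dist_norm by linarith
      then show ?thesis using \<open>0 < e\<close> by (simp add: power_less_imp_less_base)
    qed
    show "\<exists>P. eventually P (at_right 0) \<and> (\<forall>\<alpha> \<beta>. P \<alpha> \<and> P \<beta> \<longrightarrow> dist (w \<alpha>) (w \<beta>) < e)"
    proof (intro exI conjI allI impI)
      show "eventually (\<lambda>\<alpha>. 0 < \<alpha> \<and> \<alpha> \<le> \<delta>) (at_right 0)"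
        using \<delta>(1) eventually_at_right_field by (force intro: exI[of _ \<delta>])
      fix \<alpha> \<beta> assume "(0 < \<alpha> \<and> \<alpha> \<le> \<delta>) \<and> 0 < \<beta> \<and> \<beta> \<le> \<delta>"
      then show "dist (w \<alpha>) (w \<beta>) < e"
        using close[of \<alpha> \<beta>] close[of \<beta> \<alpha>] by (cases "\<alpha> \<le> \<beta>") (auto simp: dist_commute)
    qed
  qed
  have "\<exists>\<omega>. filtermap w (at_right 0) \<le> nhds \<omega>"
    by (rule cauchy_filter_complete_converges[OF cauchy complete_UNIV]) (simp_all add: filtermap_bot_iff)
  then show ?thesis unfolding filterlim_def by blast
qed

lemma eq_if_norm_midpoint_ge:
  fixes a b :: "'a::real_inner"
  assumes "norm a = r" "norm b = r" "r \<le> norm ((1/2) *\<^sub>R (a + b))"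
  shows "a = b"
proof -
  have "norm ((1/2) *\<^sub>R (a + b))^2 = (norm a^2 + norm b^2) / 2 - norm (a - b)^2 / 4"
    unfolding power2_norm_eq_inner
    by (simp add: inner_add_left inner_add_right inner_diff_left inner_diff_right inner_commute[of b a]
        algebra_simps) (simp add: field_simps)
  moreover have "r^2 \<le> norm ((1/2) *\<^sub>R (a + b))^2"
    using assms(3) norm_ge_zero[of a] assms(1) by (intro power_mono) auto
  ultimately have "norm (a - b)^2 \<le> 0" using assms(1,2) by simp
  then show ?thesis by simp
qed

definition scaled_residual :: "('a \<Rightarrow> 'b::real_normed_vector) \<Rightarrow> 'a \<Rightarrow> real \<Rightarrow> 'a \<Rightarrow> 'b" where
  "scaled_residual A x \<alpha> xa = (1 / \<alpha>) *\<^sub>R (A x - A xa)"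

lemma A_eq_sub_scaled_residual: "0 < \<alpha> \<Longrightarrow> A xa = A x - \<alpha> *\<^sub>R scaled_residual A x \<alpha> xa"
  unfolding scaled_residual_def by simp

lemma norm_scaled_residual_le_rho1:
  assumes "0 < \<alpha>" "xa \<in> Rmin A R \<alpha> (A x)"
  shows "ereal (norm (scaled_residual A x \<alpha> xa)) \<le> rho1 A R x"
  unfolding rho1_def scaled_residual_def using assms by (intro Sup_upper) auto

lemma norm_le_rho1_if_tendsto:
  assumes xs: "\<forall>\<alpha>>0. xs \<alpha> \<in> Rmin A R \<alpha> (A x)"
    and lim: "((\<lambda>\<alpha>. scaled_residual A x \<alpha> (xs \<alpha>)) \<longlongrightarrow> \<omega>) (at_right 0)"
  shows "ereal (norm \<omega>) \<le> rho1 A R x"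
proof (rule tendsto_upperbound)
  show "((\<lambda>\<alpha>. ereal (norm (scaled_residual A x \<alpha> (xs \<alpha>)))) \<longlongrightarrow> ereal (norm \<omega>)) (at_right 0)"
    using tendsto_norm[OF lim] by (rule tendsto_ereal)
  show "\<forall>\<^sub>F \<alpha> in at_right 0. ereal (norm (scaled_residual A x \<alpha> (xs \<alpha>))) \<le> rho1 A R x"
  proof (rule eventually_mono[OF eventually_at_right_less])
    fix \<alpha> :: real assume "0 < \<alpha>"
    then show "ereal (norm (scaled_residual A x \<alpha> (xs \<alpha>))) \<le> rho1 A R x"
      using xs by (simp add: norm_scaled_residual_le_rho1)
  qed
qed simp

lemma tendsto_A_if_scaled_residual_tendsto:
  assumes "((\<lambda>\<alpha>. scaled_residual A x \<alpha> (xs \<alpha>)) \<longlongrightarrow> \<omega>) (at_right 0)"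
  shows "((\<lambda>\<alpha>. A (xs \<alpha>)) \<longlongrightarrow> A x) (at_right 0)"
proof (rule Lim_transform_eventually)
  have "((\<lambda>\<alpha>. A x - \<alpha> *\<^sub>R scaled_residual A x \<alpha> (xs \<alpha>)) \<longlongrightarrow> A x - 0 *\<^sub>R \<omega>) (at_right 0)"
    using assms by (intro tendsto_intros)
  then show "((\<lambda>\<alpha>. A x - \<alpha> *\<^sub>R scaled_residual A x \<alpha> (xs \<alpha>)) \<longlongrightarrow> A x) (at_right 0)" by simp
  show "\<forall>\<^sub>F \<alpha> in at_right 0. A x - \<alpha> *\<^sub>R scaled_residual A x \<alpha> (xs \<alpha>) = A (xs \<alpha>)"
    using eventually_at_right_less by (rule eventually_mono) (metis A_eq_sub_scaled_residual)
qed

locale tikhonov =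
  fixes tau :: "'a::banach topology"
    and R :: "'a \<Rightarrow> ereal"
    and A :: "'a \<Rightarrow> 'b::{real_inner, complete_space}"
  assumes tau: "locally_convex_hausdorff tau"
    and R_pc: "proper_convex R"
    and R_cpt: "\<forall>c::real. compactin tau {z. R z \<le> ereal c}"
    and A_lin: "linear A"
    and A_cont: "continuous_map tau weak_top A"
begin

lemma R_not_MInf: "R z \<noteq> -\<infinity>"
  using R_pc unfolding proper_convex_def by blast

lemma topspace_tau [simp]: "topspace tau = UNIV"
  using tau unfolding locally_convex_hausdorff_def by blast

lemma closedin_R_sublevel: "closedin tau {z. R z \<le> ereal c}"
  using R_cpt tau compactin_imp_closedin unfolding locally_convex_hausdorff_def by blast

lemma closedin_residual_sublevel:
  assumes "0 < \<alpha>" shows "closedin tau {z. norm (g - A z)^2 / (2 * \<alpha>) \<le> s}"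
proof -
  have "norm (g - A z)^2 / (2 * \<alpha>) \<le> s \<longleftrightarrow> norm (A z - g) \<le> sqrt (2 * \<alpha> * s)" for z
  proof -
    have "norm (g - A z)^2 / (2 * \<alpha>) \<le> s \<longleftrightarrow> norm (A z - g)^2 \<le> 2 * \<alpha> * s"
      using assms by (simp add: norm_minus_commute pos_divide_le_eq mult.commute)
    also have "\<dots> \<longleftrightarrow> norm (A z - g) \<le> sqrt (2 * \<alpha> * s)"
      using real_le_rsqrt sqrt_ge_absD[of "norm (A z - g)"] by auto
    finally show ?thesis .
  qed
  then have "{z. norm (g - A z)^2 / (2 * \<alpha>) \<le> s} = {z \<in> topspace tau. A z \<in> {y. norm (y - g) \<le> sqrt (2 * \<alpha> * s)}}"
    by simp
  then show ?thesis
    using closedin_continuous_map_preimage[OF A_cont closedin_weak_top_cball] by simp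
qed

lemma closedin_Tik_sublevel:
  assumes "0 < \<alpha>" shows "closedin tau {z. Tik A R \<alpha> z g \<le> t}"
proof (cases t)
  case (real r)
  have "closedin tau {z \<in> topspace tau. ereal (norm (g - A z)^2 / (2 * \<alpha>)) + R z \<le> ereal r}"
    using closedin_residual_sublevel[OF assms] closedin_R_sublevel
    by (intro closedin_sublevel_add) simp_all
  then show ?thesis using real by (simp add: Tik_def)
next
  case MInf
  then have "{z. Tik A R \<alpha> z g \<le> t} = {}"
    using R_not_MInf by (auto simp: Tik_def)
  then show ?thesis by simp
next
  case PInf
  then show ?thesis using closedin_topspace[of tau] by simp
qed

lemma R_le_Tik: "0 < \<alpha> \<Longrightarrow> R z \<le> Tik A R \<alpha> z g"
  unfolding Tik_def by (cases "R z") auto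

lemma Rmin_nonempty:
  assumes "0 < \<alpha>" shows "Rmin A R \<alpha> g \<noteq> {}"
proof -
  obtain z0 where "R z0 \<noteq> \<infinity>" using R_pc unfolding proper_convex_def by blast
  then obtain c where c: "Tik A R \<alpha> z0 g = ereal c"
    using R_not_MInf[of z0] by (cases "R z0") (auto simp: Tik_def)
  have "R z \<le> ereal c" if "Tik A R \<alpha> z g \<le> ereal c" for z
    using R_le_Tik[OF assms, of z] that by (rule order.trans)
  then have "{z. Tik A R \<alpha> z g \<le> ereal c} \<subseteq> {z. R z \<le> ereal c}" by blast
  then have "compactin tau {z \<in> topspace tau. Tik A R \<alpha> z g \<le> ereal c}"
    using closed_compactin[OF spec[OF R_cpt, of c]] closedin_Tik_sublevel[OF assms] by simp
  then have "\<exists>z\<in>topspace tau. \<forall>y\<in>topspace tau. Tik A R \<alpha> z g \<le> Tik A R \<alpha> y g"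
    using closedin_Tik_sublevel[OF assms] c
    by (intro closedin_sublevels_compactin_attains_min[where a = z0 and c = "ereal c"]) auto
  then obtain z where z: "\<And>y. Tik A R \<alpha> z g \<le> Tik A R \<alpha> y g" by auto
  have "R z \<le> ereal c" using order.trans[OF R_le_Tik[OF assms] z[of z0]] c by simp
  then have "z \<in> dom_R R" unfolding dom_R_def by auto
  then show ?thesis using z unfolding Rmin_def by blast
qed

lemma Rmin_segment_ineq:
  assumes \<alpha>: "0 < \<alpha>" and xa: "xa \<in> Rmin A R \<alpha> g"
    and ra: "R xa = ereal ra" and rz: "R z = ereal rz" and t: "0 < t" "t < 1"
  defines "r \<equiv> g - A xa" and "d \<equiv> A z - A xa"
  shows "ra + inner r d / \<alpha> \<le> rz + t * (norm d^2 / (2 * \<alpha>))"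
proof -
  define zt where "zt = t *\<^sub>R z + (1 - t) *\<^sub>R xa"
  have "R zt \<le> ereal t * R z + ereal (1 - t) * R xa"
    using R_pc t unfolding proper_convex_def zt_def by blast
  then obtain rt where rt: "R zt = ereal rt" "rt \<le> t * rz + (1 - t) * ra"
    using R_not_MInf[of zt] rz ra by (cases "R zt") auto
  then have "Tik A R \<alpha> xa g \<le> Tik A R \<alpha> zt g"
    using xa unfolding Rmin_def dom_R_def by simp
  moreover have "A zt = t *\<^sub>R A z + (1 - t) *\<^sub>R A xa"
    unfolding zt_def by (simp add: linear_add[OF A_lin] linear_scale[OF A_lin])
  then have "g - A zt = r - t *\<^sub>R d"
    unfolding r_def d_def by (simp add: algebra_simps)
  ultimately have "norm r^2 / (2 * \<alpha>) + ra \<le> norm (r - t *\<^sub>R d)^2 / (2 * \<alpha>) + rt"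
    using ra rt unfolding Tik_def r_def by simp
  moreover have "norm (r - t *\<^sub>R d)^2 = norm r^2 - 2 * t * inner r d + t^2 * norm d^2"
    unfolding power2_norm_eq_inner
    by (simp add: inner_diff_left inner_diff_right inner_commute[of d r] power2_eq_square algebra_simps)
  then have "norm (r - t *\<^sub>R d)^2 / (2 * \<alpha>)
      = norm r^2 / (2 * \<alpha>) - t * (inner r d / \<alpha>) + t * (t * (norm d^2 / (2 * \<alpha>)))"
    using \<alpha> by (simp add: field_simps power2_eq_square)
  ultimately have "t * (inner r d / \<alpha>) \<le> t * (t * (norm d^2 / (2 * \<alpha>)) + rz - ra)"
    using rt(2) by (simp add: algebra_simps)
  then have "inner r d / \<alpha> \<le> t * (norm d^2 / (2 * \<alpha>)) + rz - ra"
    using t(1) by (rule mult_left_le_imp_le)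
  then show ?thesis by linarith
qed

lemma adj_subgrad_Rmin:
  assumes \<alpha>: "0 < \<alpha>" and xa: "xa \<in> Rmin A R \<alpha> g"
  shows "adj_subgrad A R ((1 / \<alpha>) *\<^sub>R (g - A xa)) xa"
  unfolding adj_subgrad_def
proof
  fix z
  obtain ra where ra: "R xa = ereal ra"
    using xa R_not_MInf[of xa] unfolding Rmin_def dom_R_def by (cases "R xa") auto
  define r d where "r = g - A xa" and "d = A z - A xa"
  show "R xa + ereal (inner ((1 / \<alpha>) *\<^sub>R (g - A xa)) (A (z - xa))) \<le> R z"
  proof (cases "R z")
    case (real rz)
    have "((\<lambda>t. rz + t * (norm d^2 / (2 * \<alpha>))) \<longlongrightarrow> rz + 0 * (norm d^2 / (2 * \<alpha>))) (at_right 0)"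
      by (intro tendsto_intros)
    moreover have "\<forall>\<^sub>F t in at_right 0. ra + inner r d / \<alpha> \<le> rz + t * (norm d^2 / (2 * \<alpha>))"
      using Rmin_segment_ineq[OF \<alpha> xa ra real] eventually_at_right_field
      unfolding r_def d_def by (force intro: exI[of _ 1])
    ultimately have "ra + inner r d / \<alpha> \<le> rz"
      by (intro tendsto_lowerbound) auto
    then show ?thesis
      using real ra unfolding r_def d_def by (simp add: linear_diff[OF A_lin])
  qed (use R_not_MInf in auto)
qed

lemma adj_subgrad_finite:
  assumes "adj_subgrad A R \<omega> p" shows "R p \<noteq> \<infinity>"
proof
  assume "R p = \<infinity>"
  moreover obtain z where "R z \<noteq> \<infinity>" using R_pc unfolding proper_convex_def by blast
  moreover have "R p + ereal (inner \<omega> (A (z - p))) \<le> R z" using assms unfolding adj_subgrad_def by blast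
  ultimately show False by simp
qed

lemma adj_subgrad_monotone:
  assumes "adj_subgrad A R u p" "adj_subgrad A R v q"
  shows "0 \<le> inner (u - v) (A p - A q)"
proof -
  obtain rp rq where rp: "R p = ereal rp" and rq: "R q = ereal rq"
    using adj_subgrad_finite[OF assms(1)] adj_subgrad_finite[OF assms(2)] R_not_MInf[of p] R_not_MInf[of q]
    by (cases "R p"; cases "R q") auto
  have "R p + ereal (inner u (A (q - p))) \<le> R q" "R q + ereal (inner v (A (p - q))) \<le> R p"
    using assms unfolding adj_subgrad_def by auto
  then have "rp - inner u (A p - A q) \<le> rq" "rq + inner v (A p - A q) \<le> rp"
    using rp rq by (simp_all add: linear_diff[OF A_lin] inner_diff_right)
  then show ?thesis by (simp add: inner_diff_left)
qed

lemma adj_subgrad_midpoint: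
  assumes "adj_subgrad A R u p" "adj_subgrad A R v p"
  shows "adj_subgrad A R ((1/2) *\<^sub>R (u + v)) p"
  unfolding adj_subgrad_def
proof
  fix z
  obtain rp where rp: "R p = ereal rp"
    using adj_subgrad_finite[OF assms(1)] R_not_MInf[of p] by (cases "R p") auto
  have "R p + ereal (inner u (A (z - p))) \<le> R z" "R p + ereal (inner v (A (z - p))) \<le> R z"
    using assms unfolding adj_subgrad_def by blast+
  then show "R p + ereal (inner ((1/2) *\<^sub>R (u + v)) (A (z - p))) \<le> R z"
    using rp R_not_MInf[of z] by (cases "R z") (auto simp: inner_add_left field_simps)
qed

lemma R_le_if_tendsto_A:
  assumes x_min: "R x = Inf {R z | z. A z = A x}"
    and F: "F \<noteq> bot" and ev: "\<forall>\<^sub>F i in F. R (zs i) \<le> ereal c"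
    and lim: "((\<lambda>i. A (zs i)) \<longlongrightarrow> A x) F"
  shows "R x \<le> ereal c"
proof -
  have "compactin weak_top (A ` {z. R z \<le> ereal c})"
    using R_cpt A_cont by (intro image_compactin) auto
  then have "closed (A ` {z. R z \<le> ereal c})"
    by (intro closed_if_closedin_weak_top compactin_imp_closedin Hausdorff_space_weak_top)
  moreover have "\<forall>\<^sub>F i in F. A (zs i) \<in> A ` {z. R z \<le> ereal c}"
    using ev by (rule eventually_mono) simp
  ultimately have "A x \<in> A ` {z. R z \<le> ereal c}"
    using F lim by (rule Lim_in_closed_set)
  then obtain z where "A z = A x" "R z \<le> ereal c" by auto
  moreover have "R x \<le> R z" unfolding x_min using \<open>A z = A x\<close> by (intro Inf_lower) blast
  ultimately show ?thesis by (meson order.trans)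
qed

lemma Rmin_selection: "\<exists>xs. \<forall>\<alpha>>0. xs \<alpha> \<in> Rmin A R \<alpha> g"
proof (intro exI[of _ "\<lambda>\<alpha>. SOME xa. xa \<in> Rmin A R \<alpha> g"] allI impI)
  fix \<alpha> :: real assume "0 < \<alpha>"
  then show "(SOME xa. xa \<in> Rmin A R \<alpha> g) \<in> Rmin A R \<alpha> g"
    using Rmin_nonempty[of \<alpha> g] by (simp add: some_in_eq)
qed

lemma adj_subgrad_scaled_residual:
  "0 < \<alpha> \<Longrightarrow> xa \<in> Rmin A R \<alpha> (A x) \<Longrightarrow> adj_subgrad A R (scaled_residual A x \<alpha> xa) xa"
  unfolding scaled_residual_def by (rule adj_subgrad_Rmin)

lemma R_Rmin_add_inner_le:
  assumes \<alpha>: "0 < \<alpha>" and xa: "xa \<in> Rmin A R \<alpha> (A x)"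
  shows "R xa + ereal (inner (scaled_residual A x \<alpha> xa) (A z - A x)) \<le> R z"
proof -
  let ?w = "scaled_residual A x \<alpha> xa"
  have "inner ?w (A (z - xa)) = inner ?w (A z - A x) + \<alpha> * inner ?w ?w"
    by (simp add: linear_diff[OF A_lin] A_eq_sub_scaled_residual[OF \<alpha>, of A xa x]
        inner_diff_right inner_add_right)
  then have "R xa + ereal (inner ?w (A z - A x)) \<le> R xa + ereal (inner ?w (A (z - xa)))"
    using \<alpha> by (intro add_left_mono) simp
  also have "\<dots> \<le> R z"
    using adj_subgrad_scaled_residual[OF \<alpha> xa] unfolding adj_subgrad_def by blast
  finally show ?thesis .
qed

lemma scaled_residual_gap:
  assumes \<alpha>: "0 < \<alpha>" and \<beta>: "0 < \<beta>"
    and xa: "xa \<in> Rmin A R \<alpha> (A x)" and xb: "xb \<in> Rmin A R \<beta> (A x)"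
  defines "a \<equiv> scaled_residual A x \<alpha> xa" and "b \<equiv> scaled_residual A x \<beta> xb"
  shows "(\<alpha> + \<beta>) * norm (a - b)^2 \<le> (\<beta> - \<alpha>) * (norm a^2 - norm b^2)"
proof -
  have "0 \<le> inner (a - b) (A xa - A xb)"
    unfolding a_def b_def
    by (intro adj_subgrad_monotone adj_subgrad_scaled_residual \<alpha> \<beta> xa xb)
  also have "A xa - A xb = \<beta> *\<^sub>R b - \<alpha> *\<^sub>R a"
    using A_eq_sub_scaled_residual[OF \<alpha>, of A xa x] A_eq_sub_scaled_residual[OF \<beta>, of A xb x]
    unfolding a_def b_def by simp
  also have "inner (a - b) (\<beta> *\<^sub>R b - \<alpha> *\<^sub>R a) = - inner (a - b) (\<alpha> *\<^sub>R a - \<beta> *\<^sub>R b)"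
    by (simp add: inner_diff_right)
  finally have "2 * inner (a - b) (\<alpha> *\<^sub>R a - \<beta> *\<^sub>R b) \<le> 0" by simp
  moreover have "2 * inner (a - b) (\<alpha> *\<^sub>R a - \<beta> *\<^sub>R b)
      = (\<alpha> + \<beta>) * norm (a - b)^2 + (\<alpha> - \<beta>) * (norm a^2 - norm b^2)"
    unfolding power2_norm_eq_inner
    by (simp add: inner_diff_left inner_diff_right inner_commute[of b a] algebra_simps)
  ultimately show ?thesis by (simp add: algebra_simps)
qed

lemma scaled_residual_unique:
  assumes "0 < \<alpha>" "xa \<in> Rmin A R \<alpha> (A x)" "xb \<in> Rmin A R \<alpha> (A x)"
  shows "scaled_residual A x \<alpha> xa = scaled_residual A x \<alpha> xb"
  using scaled_residual_gap[OF assms(1,1,2,3)] assms(1)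
  by (simp add: mult_le_0_iff)

lemma scaled_residual_norm_gap:
  assumes \<alpha>: "0 < \<alpha>" "\<alpha> \<le> \<beta>"
    and xa: "xa \<in> Rmin A R \<alpha> (A x)" and xb: "xb \<in> Rmin A R \<beta> (A x)"
  defines "a \<equiv> scaled_residual A x \<alpha> xa" and "b \<equiv> scaled_residual A x \<beta> xb"
  shows "norm (a - b)^2 \<le> norm a^2 - norm b^2"
proof (cases "\<alpha> = \<beta>")
  case True
  then show ?thesis using scaled_residual_unique[OF \<alpha>(1) xa] xb unfolding a_def b_def by simp
next
  case False
  have \<beta>: "0 < \<beta>" "\<alpha> < \<beta>" using \<alpha> False by auto
  let ?D = "norm (a - b)^2" and ?E = "norm a^2 - norm b^2"
  have gap: "(\<alpha> + \<beta>) * ?D \<le> (\<beta> - \<alpha>) * ?E"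
    unfolding a_def b_def by (rule scaled_residual_gap[OF \<alpha>(1) \<beta>(1) xa xb])
  moreover have "0 \<le> (\<alpha> + \<beta>) * ?D" using \<alpha> \<beta> by simp
  ultimately have "0 \<le> ?E" using \<beta> by (smt (verit) mult_pos_neg)
  then have "(\<beta> - \<alpha>) * ?E \<le> (\<alpha> + \<beta>) * ?E" using \<alpha> by (intro mult_right_mono) auto
  then show ?thesis using gap \<alpha> \<beta> by (smt (verit) mult_le_cancel_left_pos)
qed

lemma norm_scaled_residual_le_adj_subgrad:
  assumes \<omega>: "adj_subgrad A R \<omega> x" and \<alpha>: "0 < \<alpha>" and xa: "xa \<in> Rmin A R \<alpha> (A x)"
  shows "norm (scaled_residual A x \<alpha> xa) \<le> norm \<omega>"
proof -
  let ?a = "scaled_residual A x \<alpha> xa"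
  have "0 \<le> inner (?a - \<omega>) (A xa - A x)"
    by (intro adj_subgrad_monotone adj_subgrad_scaled_residual \<alpha> xa \<omega>)
  also have "A xa - A x = - (\<alpha> *\<^sub>R ?a)" using A_eq_sub_scaled_residual[OF \<alpha>, of A xa x] by simp
  finally have "inner ?a ?a \<le> inner \<omega> ?a"
    using \<alpha> by (simp add: inner_diff_left mult_le_0_iff)
  also have "\<dots> \<le> norm \<omega> * norm ?a" by (rule norm_cauchy_schwarz)
  finally have "norm ?a * norm ?a \<le> norm \<omega> * norm ?a"
    by (simp add: power2_eq_square[symmetric] dot_square_norm)
  then show ?thesis by (cases "norm ?a = 0") (auto simp: mult_le_cancel_right)
qed

lemma rho1_le_norm_adj_subgrad:
  assumes "adj_subgrad A R \<omega> x" shows "rho1 A R x \<le> ereal (norm \<omega>)"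
  unfolding rho1_def
proof (rule Sup_least)
  fix y assume "y \<in> {ereal (norm (A x - A xa) / \<alpha>) | \<alpha> xa. 0 < \<alpha> \<and> xa \<in> Rmin A R \<alpha> (A x)}"
  then obtain \<alpha> xa where y: "y = ereal (norm (A x - A xa) / \<alpha>)" "0 < \<alpha>" "xa \<in> Rmin A R \<alpha> (A x)"
    by blast
  then show "y \<le> ereal (norm \<omega>)"
    using norm_scaled_residual_le_adj_subgrad[OF assms y(2,3)] by (simp add: scaled_residual_def)
qed

lemma min_norm_adj_subgrad_unique:
  assumes "adj_subgrad A R \<omega> x" "ereal (norm \<omega>) = rho1 A R x"
    and "adj_subgrad A R \<omega>' x" "ereal (norm \<omega>') = rho1 A R x"
  shows "\<omega> = \<omega>'"
proof (rule eq_if_norm_midpoint_ge)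
  show "norm \<omega>' = norm \<omega>" using assms(2,4) by (metis ereal.inject)
  have "rho1 A R x \<le> ereal (norm ((1/2) *\<^sub>R (\<omega> + \<omega>')))"
    using assms(1,3) by (intro rho1_le_norm_adj_subgrad adj_subgrad_midpoint)
  then show "norm \<omega> \<le> norm ((1/2) *\<^sub>R (\<omega> + \<omega>'))" using assms(2) by (metis ereal_less_eq(3))
qed simp

lemma scaled_residual_tendsto:
  assumes fin: "rho1 A R x \<noteq> \<infinity>"
  obtains \<omega> where "\<And>xs. \<forall>\<alpha>>0. xs \<alpha> \<in> Rmin A R \<alpha> (A x) \<Longrightarrow>
    ((\<lambda>\<alpha>. scaled_residual A x \<alpha> (xs \<alpha>)) \<longlongrightarrow> \<omega>) (at_right 0)"
proof -
  obtain xs0 where xs0: "\<And>\<alpha>. 0 < \<alpha> \<Longrightarrow> xs0 \<alpha> \<in> Rmin A R \<alpha> (A x)"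
    using Rmin_selection by blast
  define w where "w \<alpha> = scaled_residual A x \<alpha> (xs0 \<alpha>)" for \<alpha>
  have w_le: "ereal (norm (w \<alpha>)) \<le> rho1 A R x" if "0 < \<alpha>" for \<alpha>
    unfolding w_def using that xs0[OF that] by (rule norm_scaled_residual_le_rho1)
  then obtain M where M: "rho1 A R x = ereal M"
    using fin w_le[of 1] by (cases "rho1 A R x") auto
  obtain \<omega> where \<omega>: "(w \<longlongrightarrow> \<omega>) (at_right 0)"
  proof (atomize_elim, rule tendsto_at_right_0_if_norm_gap)
    show "norm (w \<alpha> - w \<beta>)^2 \<le> norm (w \<alpha>)^2 - norm (w \<beta>)^2" if "0 < \<alpha>" "\<alpha> \<le> \<beta>" for \<alpha> \<beta>
      unfolding w_def using that xs0 by (intro scaled_residual_norm_gap) auto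
    show "norm (w \<alpha>) \<le> M" if "0 < \<alpha>" for \<alpha>
      using w_le[OF that] M by simp
  qed
  show thesis
  proof (rule that)
    fix xs assume xs: "\<forall>\<alpha>>0. xs \<alpha> \<in> Rmin A R \<alpha> (A x)"
    have "\<forall>\<^sub>F \<alpha> in at_right 0. w \<alpha> = scaled_residual A x \<alpha> (xs \<alpha>)"
    proof (rule eventually_mono[OF eventually_at_right_less])
      fix \<alpha> :: real assume "0 < \<alpha>"
      then show "w \<alpha> = scaled_residual A x \<alpha> (xs \<alpha>)"
        unfolding w_def using xs xs0 by (simp add: scaled_residual_unique)
    qed
    then show "((\<lambda>\<alpha>. scaled_residual A x \<alpha> (xs \<alpha>)) \<longlongrightarrow> \<omega>) (at_right 0)"
      using \<omega> by (rule Lim_transform_eventually[rotated])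
  qed
qed

lemma adj_subgrad_if_tendsto:
  assumes x_min: "R x = Inf {R z | z. A z = A x}"
    and xs: "\<forall>\<alpha>>0. xs \<alpha> \<in> Rmin A R \<alpha> (A x)"
    and lim: "((\<lambda>\<alpha>. scaled_residual A x \<alpha> (xs \<alpha>)) \<longlongrightarrow> \<omega>) (at_right 0)"
  shows "adj_subgrad A R \<omega> x"
  unfolding adj_subgrad_def
proof
  fix z
  let ?ip = "inner \<omega> (A z - A x)"
  show "R x + ereal (inner \<omega> (A (z - x))) \<le> R z"
  proof (cases "R z")
    case (real rz)
    have "R x \<le> ereal (rz - ?ip) + ereal \<delta>" if "0 < \<delta>" for \<delta>
    proof -
      have "((\<lambda>\<alpha>. inner (scaled_residual A x \<alpha> (xs \<alpha>)) (A z - A x)) \<longlongrightarrow> ?ip) (at_right 0)"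
        using lim by (intro tendsto_intros)
      then have "\<forall>\<^sub>F \<alpha> in at_right 0. ?ip - \<delta> < inner (scaled_residual A x \<alpha> (xs \<alpha>)) (A z - A x)"
        using that by (intro order_tendstoD) auto
      then have "\<forall>\<^sub>F \<alpha> in at_right 0. R (xs \<alpha>) \<le> ereal (rz - ?ip + \<delta>)"
        using eventually_at_right_less
      proof eventually_elim
        case (elim \<alpha>)
        then have "R (xs \<alpha>) + ereal (inner (scaled_residual A x \<alpha> (xs \<alpha>)) (A z - A x)) \<le> ereal rz"
          using R_Rmin_add_inner_le[OF elim(2) xs[rule_format, OF elim(2)], of z] real by simp
        then show ?case using elim R_not_MInf[of "xs \<alpha>"] by (cases "R (xs \<alpha>)") auto
      qed
      then have "R x \<le> ereal (rz - ?ip + \<delta>)"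
        using tendsto_A_if_scaled_residual_tendsto[OF lim] by (intro R_le_if_tendsto_A[OF x_min]) simp_all
      then show ?thesis by simp
    qed
    then have "R x \<le> ereal (rz - ?ip)" by (rule ereal_le_epsilon2)
    then show ?thesis
      using real R_not_MInf[of x] by (cases "R x") (auto simp: linear_diff[OF A_lin])
  qed (use R_not_MInf in auto)
qed

end

theorem proposition4p1:
  fixes tau :: "'a::banach topology"
    and R :: "'a \<Rightarrow> ereal"
    and A :: "'a \<Rightarrow> 'b::{real_inner, complete_space}"
    and x :: 'a
  assumes tau: "locally_convex_hausdorff tau"
    and R_pc: "proper_convex R"
    and R_cpt: "\<forall>c::real. compactin tau {z. R z \<le> ereal c}"
    and A_lin: "linear A"
    and A_cont: "continuous_map tau weak_top A"
    and x_min: "R x = Inf {R z | z. A z = A x}"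
  shows "rho1 A R x = Inf {ereal (norm \<omega>) | \<omega>. adj_subgrad A R \<omega> x}
    \<and> (rho1 A R x \<noteq> \<infinity> \<longrightarrow>
         (\<exists>\<omega>. adj_subgrad A R \<omega> x \<and> ereal (norm \<omega>) = rho1 A R x
            \<and> (\<forall>\<omega>'. adj_subgrad A R \<omega>' x \<and> ereal (norm \<omega>') = rho1 A R x \<longrightarrow> \<omega>' = \<omega>)
            \<and> (\<forall>xs :: real \<Rightarrow> 'a. (\<forall>\<alpha>>0. xs \<alpha> \<in> Rmin A R \<alpha> (A x)) \<longrightarrow>
                 limitin weak_top (\<lambda>\<alpha>. (1 / \<alpha>) *\<^sub>R (A x - A (xs \<alpha>))) \<omega> (at_right 0))))"
proof -
  interpret tikhonov tau R A using tau R_pc R_cpt A_lin A_cont by (rule tikhonov.intro)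
  let ?S = "{ereal (norm \<omega>) | \<omega>. adj_subgrad A R \<omega> x}"
  have rho1_le: "rho1 A R x \<le> Inf ?S"
    by (rule Inf_greatest) (auto simp: rho1_le_norm_adj_subgrad)
  show ?thesis
  proof (cases "rho1 A R x = \<infinity>")
    case False
    obtain \<omega> where lim: "\<And>xs. \<forall>\<alpha>>0. xs \<alpha> \<in> Rmin A R \<alpha> (A x) \<Longrightarrow>
        ((\<lambda>\<alpha>. scaled_residual A x \<alpha> (xs \<alpha>)) \<longlongrightarrow> \<omega>) (at_right 0)"
      using scaled_residual_tendsto[OF False] by blast
    obtain xs0 where xs0: "\<forall>\<alpha>>0. xs0 \<alpha> \<in> Rmin A R \<alpha> (A x)" using Rmin_selection by blast
    have sub: "adj_subgrad A R \<omega> x" by (rule adj_subgrad_if_tendsto[OF x_min xs0 lim[OF xs0]])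
    have norm: "ereal (norm \<omega>) = rho1 A R x"
      using norm_le_rho1_if_tendsto[OF xs0 lim[OF xs0]] rho1_le_norm_adj_subgrad[OF sub] by simp
    have "Inf ?S \<le> rho1 A R x" unfolding norm[symmetric] using sub by (intro Inf_lower) blast
    then have "rho1 A R x = Inf ?S" using rho1_le by simp
    moreover have "\<omega>' = \<omega>" if "adj_subgrad A R \<omega>' x \<and> ereal (norm \<omega>') = rho1 A R x" for \<omega>'
      using min_norm_adj_subgrad_unique[OF sub norm] that by metis
    moreover have "limitin weak_top (\<lambda>\<alpha>. (1 / \<alpha>) *\<^sub>R (A x - A (xs \<alpha>))) \<omega> (at_right 0)"
      if "\<forall>\<alpha>>0. xs \<alpha> \<in> Rmin A R \<alpha> (A x)" for xs
      using limitin_weak_top_if_tendsto[OF lim[OF that]] by (simp add: scaled_residual_def)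
    ultimately show ?thesis using sub norm by blast
  qed (use rho1_le in simp)
qed

end
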